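(* Let $P_n$ be a labeled path with ad-pattern $w=w_1\cdots w_{n-1}$. Suppose that at least one of the following holds: (i) $RT(P_n)$ contains a $(3,1,1)$ sub-ribbon, i.e. $w$ contains $aadd$ as a factor (consecutive letters); (ii) $RT(P_n)$ begins with a $(2,1,1)$ sub-ribbon, i.e. $w$ begins with $add$; (iii) $RT(P_n)$ ends with a $(3,1)$ sub-ribbon, i.e. $w$ ends with $aad$. Then $X(P_n;\mathbf{x},q)$ is not symmetric.
   Context: A labeled path $P_n$ is the path graph with vertices $v_1,\dots,v_n$ (edges $v_iv_{i+1}$) where $v_i$ carries label $\sigma_i$ for a permutation $\sigma$ of $[n]$; vertices are identified with labels. A proper coloring is $c\colon[n]\to\{1,2,\dots\}$ with adjacent vertices colored differently; $\operatorname{asc}(c)=\#\{ij\in E: i<j,\ c(i)<c(j)\}$. The CQF is $X(P_n;\mathbf{x},q)=\sum_{c \text{ proper}} x_{c(1)}\cdots x_{c(n)}q^{\operatorname{asc}(c)}$; it is symmetric if each coefficient of $q^k$ is a symmetric function. The ad-pattern of $P_n$ is $w_1\cdots w_{n-1}$ with $w_i=a$ if $\sigma_i<\sigma_{i+1}$ and $w_i=d$ otherwise. The ribbon diagram $RT(P_n)$: start with box $1$, and for $i=1,\dots,n-1$ place box $i+1$ immediately right of box $i$ if $w_i=a$ and immediately above box $i$ if $w_i=d$. A $\beta$ sub-ribbon is a set of consecutive boxes whose shape is the ribbon with row lengths $\beta$ (bottom to top). *)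

theory Defs
  imports Main "HOL-Library.FuncSet" "HOL-Combinatorics.Permutations"
begin

text \<open>A labeled path P_n: vertices v_1..v_n, vertex v_i carries label sigma i,
  where sigma permutes {1..n}. Vertices are identified with labels, so the
  edges are {sigma i, sigma (i+1)} for 1 <= i < n.\<close>

definition labeled_path :: "nat \<Rightarrow> (nat \<Rightarrow> nat) \<Rightarrow> bool" where
  "labeled_path n \<sigma> \<longleftrightarrow> \<sigma> permutes {1..n}"

definition proper_coloring :: "nat \<Rightarrow> (nat \<Rightarrow> nat) \<Rightarrow> (nat \<Rightarrow> nat) \<Rightarrow> bool" where
  "proper_coloring n \<sigma> c \<longleftrightarrow> c \<in> {1..n} \<rightarrow>\<^sub>E {1..} \<and>
     (\<forall>i\<in>{1..<n}. c (\<sigma> i) \<noteq> c (\<sigma> (Suc i)))"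

definition asc :: "nat \<Rightarrow> (nat \<Rightarrow> nat) \<Rightarrow> (nat \<Rightarrow> nat) \<Rightarrow> nat" where
  "asc n \<sigma> c = card {i\<in>{1..<n}.
      c (min (\<sigma> i) (\<sigma> (Suc i))) < c (max (\<sigma> i) (\<sigma> (Suc i)))}"

text \<open>Coefficient of q^k x^alpha in X(P_n; x, q), where the monomial x^alpha is
  given by an exponent function alpha (alpha i = exponent of x_i):
  the number of proper colorings with exactly alpha i vertices of colour i and
  k ascents.\<close>
definition cqf_coeff :: "nat \<Rightarrow> (nat \<Rightarrow> nat) \<Rightarrow> nat \<Rightarrow> (nat \<Rightarrow> nat) \<Rightarrow> nat" where
  "cqf_coeff n \<sigma> k \<alpha> = card {c. proper_coloring n \<sigma> c \<and> asc n \<sigma> c = k \<and>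
      (\<forall>i. card {v\<in>{1..n}. c v = i} = \<alpha> i)}"

definition cqf_symmetric :: "nat \<Rightarrow> (nat \<Rightarrow> nat) \<Rightarrow> bool" where
  "cqf_symmetric n \<sigma> \<longleftrightarrow> (\<forall>k \<alpha> \<pi>. \<pi> permutes {1..} \<longrightarrow>
      cqf_coeff n \<sigma> k (\<alpha> \<circ> \<pi>) = cqf_coeff n \<sigma> k \<alpha>)"

datatype ad = A | D

definition ad_pattern :: "nat \<Rightarrow> (nat \<Rightarrow> nat) \<Rightarrow> ad list" where
  "ad_pattern n \<sigma> = map (\<lambda>i. if \<sigma> i < \<sigma> (Suc i) then A else D) [1..<n]"

end

(*
  A proper coloring without ascents decreases along every edge from the smaller to the larger
  label, so its color-1 class consists of peaks (labels exceeding all their neighbours): in the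
  q^0 coefficient, x_1 occurs with exponent at most the number of peaks. If some peak has two
  neighbours whose only larger neighbour is the peak itself, color that peak 1, the remaining
  peaks and those two neighbours 2, and everything else with colors >= 3 decreasing in the
  label. The exponent of x_2 then exceeds the number of peaks, so exchanging x_1 and x_2
  breaks symmetry. In the ad-pattern such a peak is a factor AD with A or the beginning on its
  left and D or the end on its right, and each of the three ribbon conditions provides one.
*)

theory Submission
  imports Defs
begin

definition path_adj :: "nat \<Rightarrow> (nat \<Rightarrow> nat) \<Rightarrow> nat \<Rightarrow> nat \<Rightarrow> bool" where
  "path_adj n \<sigma> l m \<longleftrightarrow>
     (\<exists>i\<in>{1..<n}. (\<sigma> i = l \<and> \<sigma> (Suc i) = m) \<or> (\<sigma> i = m \<and> \<sigma> (Suc i) = l))"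

definition path_peaks :: "nat \<Rightarrow> (nat \<Rightarrow> nat) \<Rightarrow> nat set" where
  "path_peaks n \<sigma> = {l\<in>{1..n}. \<forall>m. path_adj n \<sigma> l m \<longrightarrow> m < l}"

definition descending_coloring :: "nat \<Rightarrow> (nat \<Rightarrow> nat) \<Rightarrow> (nat \<Rightarrow> nat) \<Rightarrow> bool" where
  "descending_coloring n \<sigma> c \<longleftrightarrow> (\<forall>l m. path_adj n \<sigma> l m \<longrightarrow> l < m \<longrightarrow> c m < c l)"

lemma path_adj_sym: "path_adj n \<sigma> l m \<Longrightarrow> path_adj n \<sigma> m l"
  unfolding path_adj_def by blast

lemma path_adj_edge: "i \<in> {1..<n} \<Longrightarrow> path_adj n \<sigma> (\<sigma> i) (\<sigma> (Suc i))"
  unfolding path_adj_def by blast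

lemma path_adj_in_range:
  assumes "\<sigma> permutes {1..n}" and "path_adj n \<sigma> l m"
  shows "l \<in> {1..n}"
  using assms permutes_in_image[OF assms(1)] unfolding path_adj_def by fastforce

lemma path_adj_neq:
  assumes "\<sigma> permutes {1..n}" and "path_adj n \<sigma> l m"
  shows "l \<noteq> m"
  using assms permutes_inj[OF assms(1)] unfolding path_adj_def by (metis injD n_not_Suc_n)

lemma path_adj_Suc_iff:
  assumes perm: "\<sigma> permutes {1..n}" and "Suc j \<le> n"
  shows "path_adj n \<sigma> (\<sigma> (Suc j)) m \<longleftrightarrow>
           (0 < j \<and> m = \<sigma> j) \<or> (Suc j < n \<and> m = \<sigma> (Suc (Suc j)))"
proof -
  have eq: "\<sigma> a = \<sigma> b \<longleftrightarrow> a = b" for a b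
    using permutes_inj[OF perm] by (meson injD)
  show ?thesis
    unfolding path_adj_def using assms(2) by (auto simp: eq)
qed

lemma finite_path_peaks: "finite (path_peaks n \<sigma>)"
  unfolding path_peaks_def by simp

lemma asc_eq_0_iff_descending_coloring:
  assumes "proper_coloring n \<sigma> c"
  shows "asc n \<sigma> c = 0 \<longleftrightarrow> descending_coloring n \<sigma> c"
proof -
  have proper: "c (\<sigma> i) \<noteq> c (\<sigma> (Suc i))" if "i \<in> {1..<n}" for i
    using assms that unfolding proper_coloring_def by blast
  have "asc n \<sigma> c = 0 \<longleftrightarrow>
      (\<forall>i\<in>{1..<n}. \<not> c (min (\<sigma> i) (\<sigma> (Suc i))) < c (max (\<sigma> i) (\<sigma> (Suc i))))"
    unfolding asc_def by auto
  also have "\<dots> \<longleftrightarrow> descending_coloring n \<sigma> c"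
  proof
    assume no_asc: "\<forall>i\<in>{1..<n}. \<not> c (min (\<sigma> i) (\<sigma> (Suc i))) < c (max (\<sigma> i) (\<sigma> (Suc i)))"
    show "descending_coloring n \<sigma> c"
      unfolding descending_coloring_def
    proof (intro allI impI)
      fix l m assume "path_adj n \<sigma> l m" and "l < m"
      then obtain i where i: "i \<in> {1..<n}" and lm: "{\<sigma> i, \<sigma> (Suc i)} = {l, m}"
        unfolding path_adj_def by blast
      have "\<not> c (min (\<sigma> i) (\<sigma> (Suc i))) < c (max (\<sigma> i) (\<sigma> (Suc i)))"
        using no_asc i by blast
      with proper[OF i] lm \<open>l < m\<close> show "c m < c l"
        by (auto simp: doubleton_eq_iff min_def max_def)
    qed
  next
    assume "descending_coloring n \<sigma> c"
    then have "c (max (\<sigma> i) (\<sigma> (Suc i))) < c (min (\<sigma> i) (\<sigma> (Suc i)))"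
      if "i \<in> {1..<n}" and "\<sigma> i \<noteq> \<sigma> (Suc i)" for i
      using that path_adj_edge[OF that(1)] path_adj_sym[OF path_adj_edge[OF that(1)]]
      unfolding descending_coloring_def by (cases "\<sigma> i < \<sigma> (Suc i)") (auto simp: min_def max_def)
    then show "\<forall>i\<in>{1..<n}. \<not> c (min (\<sigma> i) (\<sigma> (Suc i))) < c (max (\<sigma> i) (\<sigma> (Suc i)))"
      by (metis less_asym max.idem min.idem)
  qed
  finally show ?thesis .
qed

lemma proper_coloring_if_descending_coloring:
  assumes "\<sigma> permutes {1..n}" and "c \<in> {1..n} \<rightarrow>\<^sub>E {1..}" and "descending_coloring n \<sigma> c"
  shows "proper_coloring n \<sigma> c"
  unfolding proper_coloring_def
proof (intro conjI ballI assms(2))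
  fix i assume "i \<in> {1..<n}"
  then have adj: "path_adj n \<sigma> (\<sigma> i) (\<sigma> (Suc i))"
    by (rule path_adj_edge)
  then have "\<sigma> i \<noteq> \<sigma> (Suc i)"
    using path_adj_neq[OF assms(1)] by blast
  then show "c (\<sigma> i) \<noteq> c (\<sigma> (Suc i))"
    using assms(3) adj path_adj_sym[OF adj] unfolding descending_coloring_def
    by (metis less_irrefl linorder_neqE_nat)
qed

lemma color_one_class_subset_path_peaks:
  assumes perm: "\<sigma> permutes {1..n}"
    and c: "proper_coloring n \<sigma> c" "asc n \<sigma> c = 0"
  shows "{v\<in>{1..n}. c v = 1} \<subseteq> path_peaks n \<sigma>"
proof
  fix l assume l: "l \<in> {v\<in>{1..n}. c v = 1}"
  have "m < l" if adj: "path_adj n \<sigma> l m" for m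
  proof (rule ccontr)
    assume "\<not> m < l"
    with path_adj_neq[OF perm adj] have "l < m" by simp
    with adj c have "c m < c l"
      using asc_eq_0_iff_descending_coloring unfolding descending_coloring_def by blast
    moreover have "c m \<ge> 1"
      using c(1) path_adj_in_range[OF perm path_adj_sym[OF adj]]
      unfolding proper_coloring_def by auto
    ultimately show False using l by simp
  qed
  with l show "l \<in> path_peaks n \<sigma>"
    unfolding path_peaks_def by blast
qed

lemma finite_colorings_with_content:
  fixes n :: nat and \<alpha> :: "nat \<Rightarrow> nat"
  shows "finite {c \<in> {1..n} \<rightarrow>\<^sub>E UNIV. \<forall>i. card {v\<in>{1..n}. c v = i} = \<alpha> i}"
  (is "finite ?C")
proof (cases "?C = {}")
  case False
  then obtain c' where c': "c' \<in> ?C" by blast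
  have "?C \<subseteq> {1..n} \<rightarrow>\<^sub>E c' ` {1..n}"
  proof
    fix c assume c: "c \<in> ?C"
    have "c v \<in> c' ` {1..n}" if v: "v \<in> {1..n}" for v
    proof -
      have "0 < card {w\<in>{1..n}. c w = c v}"
        using v by (auto simp: card_gt_0_iff)
      also have "\<dots> = card {w\<in>{1..n}. c' w = c v}"
        using c c' by simp
      finally have "{w\<in>{1..n}. c' w = c v} \<noteq> {}"
        by (metis card.empty less_irrefl)
      then obtain w where "w \<in> {1..n}" and "c' w = c v" by blast
      then show ?thesis by (metis rev_image_eqI)
    qed
    with c show "c \<in> {1..n} \<rightarrow>\<^sub>E c' ` {1..n}" by (auto simp: PiE_iff)
  qed
  then show ?thesis by (rule finite_subset) (simp add: finite_PiE)
qed (simp only: finite.emptyI)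

lemma cqf_coeff_pos:
  assumes "proper_coloring n \<sigma> c"
  shows "0 < cqf_coeff n \<sigma> (asc n \<sigma> c) (\<lambda>i. card {v\<in>{1..n}. c v = i})"
proof -
  let ?S = "{d. proper_coloring n \<sigma> d \<and> asc n \<sigma> d = asc n \<sigma> c \<and>
               (\<forall>i. card {v\<in>{1..n}. d v = i} = card {v\<in>{1..n}. c v = i})}"
  have "?S \<subseteq> {d \<in> {1..n} \<rightarrow>\<^sub>E UNIV. \<forall>i. card {v\<in>{1..n}. d v = i} = card {v\<in>{1..n}. c v = i}}"
    unfolding proper_coloring_def by (auto simp: PiE_iff)
  then have "finite ?S"
    using finite_colorings_with_content by (rule finite_subset)
  moreover have "c \<in> ?S" using assms by simp
  ultimately show ?thesis
    unfolding cqf_coeff_def by (auto simp: card_gt_0_iff)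
qed

lemma not_symmetric_if_ascent_free_class_exceeds_peaks:
  assumes perm: "\<sigma> permutes {1..n}"
    and c: "proper_coloring n \<sigma> c" "asc n \<sigma> c = 0"
    and large: "card (path_peaks n \<sigma>) < card {v\<in>{1..n}. c v = j}"
  shows "\<not> cqf_symmetric n \<sigma>"
proof
  assume sym: "cqf_symmetric n \<sigma>"
  define \<alpha> where "\<alpha> i = card {v\<in>{1..n}. c v = i}" for i
  have "{v\<in>{1..n}. c v = j} \<noteq> {}"
    using large by (metis card.empty not_less0)
  then have "j \<in> {1..}"
    using c(1) unfolding proper_coloring_def by auto
  then have "Transposition.transpose 1 j permutes {1..}"
    by (intro permutes_swap_id) auto
  with sym have "cqf_coeff n \<sigma> 0 (\<alpha> \<circ> Transposition.transpose 1 j) = cqf_coeff n \<sigma> 0 \<alpha>"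
    unfolding cqf_symmetric_def by blast
  also have "\<dots> > 0"
    using cqf_coeff_pos[OF c(1)] c(2) unfolding \<alpha>_def by simp
  finally have "{d. proper_coloring n \<sigma> d \<and> asc n \<sigma> d = 0 \<and>
      (\<forall>i. card {v\<in>{1..n}. d v = i} = (\<alpha> \<circ> Transposition.transpose 1 j) i)} \<noteq> {}"
    unfolding cqf_coeff_def by (metis card.empty less_irrefl)
  then obtain d where d: "proper_coloring n \<sigma> d" "asc n \<sigma> d = 0"
    and "card {v\<in>{1..n}. d v = 1} = (\<alpha> \<circ> Transposition.transpose 1 j) 1" by blast
  then have d1: "card {v\<in>{1..n}. d v = 1} = \<alpha> j" by simp
  have "card {v\<in>{1..n}. d v = 1} \<le> card (path_peaks n \<sigma>)"
    using color_one_class_subset_path_peaks[OF perm d] finite_path_peaks by (rule card_mono[rotated])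
  with d1 large show False unfolding \<alpha>_def by simp
qed

lemma not_symmetric_if_peak_with_dominated_neighbours:
  assumes perm: "\<sigma> permutes {1..n}"
    and peak: "lv \<in> path_peaks n \<sigma>"
    and adj: "path_adj n \<sigma> lx lv" "path_adj n \<sigma> ly lv" and "lx \<noteq> ly"
    and dom_x: "\<forall>m. path_adj n \<sigma> lx m \<longrightarrow> m = lv \<or> m < lx"
    and dom_y: "\<forall>m. path_adj n \<sigma> ly m \<longrightarrow> m = lv \<or> m < ly"
  shows "\<not> cqf_symmetric n \<sigma>"
proof -
  let ?P = "path_peaks n \<sigma>"
  have below_peak: "m < lv" if "path_adj n \<sigma> lv m" for m
    using peak that unfolding path_peaks_def by blast
  have "lx < lv" "ly < lv"
    using below_peak path_adj_sym adj by blast+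
  with adj have "lx \<notin> ?P" "ly \<notin> ?P"
    unfolding path_peaks_def by (metis (no_types, lifting) mem_Collect_eq less_asym)+
  define S where "S = (?P - {lv}) \<union> {lx, ly}"
  have "lx \<in> {1..n}" "ly \<in> {1..n}"
    using path_adj_in_range[OF perm] adj by blast+
  then have S_range: "S \<subseteq> {1..n}"
    unfolding S_def path_peaks_def by blast
  have "lv \<notin> S"
    using \<open>lx < lv\<close> \<open>ly < lv\<close> unfolding S_def by blast
  have card_S: "card S = card ?P + 1"
  proof -
    have "card S = card (?P - {lv}) + card {lx, ly}"
      unfolding S_def using finite_path_peaks \<open>lx \<notin> ?P\<close> \<open>ly \<notin> ?P\<close>
      by (intro card_Un_disjoint) auto
    moreover have "card (?P - {lv}) = card ?P - 1" and "card ?P > 0"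
      using peak finite_path_peaks by (auto simp: card_gt_0_iff)
    ultimately show ?thesis
      using \<open>lx \<noteq> ly\<close> by simp
  qed
  text \<open>Labels outside S \<union> {lv} get n + 3 - l \<ge> 3, which decreases along the labels.\<close>
  define c where "c = (\<lambda>l\<in>{1..n}. if l = lv then 1 else if l \<in> S then 2 else n + 3 - l)"
  have "descending_coloring n \<sigma> c"
    unfolding descending_coloring_def
  proof (intro allI impI)
    fix lo hi assume lo_hi: "path_adj n \<sigma> lo hi" "lo < hi"
    have range: "lo \<in> {1..n}" "hi \<in> {1..n}"
      using path_adj_in_range[OF perm] path_adj_sym lo_hi(1) by blast+
    have "lo \<noteq> lv" using below_peak lo_hi by force
    show "c hi < c lo"
    proof (cases "lo \<in> S")
      case True
      with lo_hi have "lo = lx \<or> lo = ly"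
        unfolding S_def path_peaks_def by force
      then have "hi = lv" using dom_x dom_y lo_hi by force
      then show ?thesis using True range \<open>lo \<noteq> lv\<close> unfolding c_def by simp
    next
      case False
      then show ?thesis using range \<open>lo \<noteq> lv\<close> lo_hi(2) unfolding c_def by auto
    qed
  qed
  moreover have "c \<in> {1..n} \<rightarrow>\<^sub>E {1..}"
    unfolding c_def by auto
  ultimately have "proper_coloring n \<sigma> c" and "asc n \<sigma> c = 0"
    using proper_coloring_if_descending_coloring[OF perm] asc_eq_0_iff_descending_coloring by blast+
  moreover have "{v\<in>{1..n}. c v = 2} = S"
    using S_range \<open>lv \<notin> S\<close> unfolding c_def by auto
  ultimately show ?thesis
    using not_symmetric_if_ascent_free_class_exceeds_peaks[OF perm, of c 2] card_S by simp
qed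

lemma not_symmetric_if_peak_at:
  assumes perm: "\<sigma> permutes {1..n}" and "p + 3 \<le> n"
    and up: "\<sigma> (p + 1) < \<sigma> (p + 2)" and down: "\<sigma> (p + 3) < \<sigma> (p + 2)"
    and left: "p = 0 \<or> \<sigma> p < \<sigma> (p + 1)"
    and right: "p + 3 = n \<or> \<sigma> (p + 4) < \<sigma> (p + 3)"
  shows "\<not> cqf_symmetric n \<sigma>"
proof (rule not_symmetric_if_peak_with_dominated_neighbours[OF perm])
  have nbrs: "path_adj n \<sigma> (\<sigma> (Suc j)) m \<longleftrightarrow>
      (0 < j \<and> m = \<sigma> j) \<or> (Suc j < n \<and> m = \<sigma> (Suc (Suc j)))" if "Suc j \<le> n" for j m
    using path_adj_Suc_iff[OF perm that] .
  have "\<sigma> (p + 2) \<in> {1..n}"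
    using permutes_in_image[OF perm] \<open>p + 3 \<le> n\<close> by simp
  then show "\<sigma> (p + 2) \<in> path_peaks n \<sigma>"
    unfolding path_peaks_def using nbrs[of "p + 1"] \<open>p + 3 \<le> n\<close> up down by (auto simp: numeral_eq_Suc)
  show "path_adj n \<sigma> (\<sigma> (p + 1)) (\<sigma> (p + 2))" "path_adj n \<sigma> (\<sigma> (p + 3)) (\<sigma> (p + 2))"
    using nbrs[of p] nbrs[of "p + 2"] \<open>p + 3 \<le> n\<close> by (auto simp: numeral_eq_Suc)
  show "\<sigma> (p + 1) \<noteq> \<sigma> (p + 3)"
    by (simp add: inj_eq[OF permutes_inj[OF perm]])
  show "\<forall>m. path_adj n \<sigma> (\<sigma> (p + 1)) m \<longrightarrow> m = \<sigma> (p + 2) \<or> m < \<sigma> (p + 1)"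
    using nbrs[of p] \<open>p + 3 \<le> n\<close> left by (auto simp: numeral_eq_Suc)
  show "\<forall>m. path_adj n \<sigma> (\<sigma> (p + 3)) m \<longrightarrow> m = \<sigma> (p + 2) \<or> m < \<sigma> (p + 3)"
    using nbrs[of "p + 2"] \<open>p + 3 \<le> n\<close> right by (auto simp: numeral_eq_Suc)
qed

lemma length_ad_pattern: "length (ad_pattern n \<sigma>) = n - 1"
  by (simp add: ad_pattern_def)

lemma ad_pattern_nth_eq_A_iff:
  "j + 1 < n \<Longrightarrow> ad_pattern n \<sigma> ! j = A \<longleftrightarrow> \<sigma> (j + 1) < \<sigma> (j + 2)"
  by (simp add: ad_pattern_def)

lemma ad_pattern_nth_eq_D_iff:
  assumes "\<sigma> permutes {1..n}" and "j + 1 < n"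
  shows "ad_pattern n \<sigma> ! j = D \<longleftrightarrow> \<sigma> (j + 2) < \<sigma> (j + 1)"
proof -
  have "\<sigma> (j + 1) \<noteq> \<sigma> (j + 2)"
    by (simp add: inj_eq[OF permutes_inj[OF assms(1)]])
  then show ?thesis
    using assms(2) by (auto simp: ad_pattern_def)
qed

lemma not_symmetric_if_ad_factor:
  assumes perm: "\<sigma> permutes {1..n}"
    and w: "ad_pattern n \<sigma> = u @ [A, D] @ v"
    and left: "u = [] \<or> last u = A" and right: "v = [] \<or> hd v = D"
  shows "\<not> cqf_symmetric n \<sigma>"
proof -
  define p where "p = length u"
  have len: "n = p + 3 + length v"
    using arg_cong[OF w, of length] unfolding length_ad_pattern p_def by simp
  have "ad_pattern n \<sigma> ! p = A" "ad_pattern n \<sigma> ! (p + 1) = D"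
    unfolding w p_def by (simp_all add: nth_append)
  then have up: "\<sigma> (p + 1) < \<sigma> (p + 2)" and down: "\<sigma> (p + 3) < \<sigma> (p + 2)"
    using ad_pattern_nth_eq_A_iff[of p n \<sigma>] ad_pattern_nth_eq_D_iff[OF perm, of "p + 1"] len
    by (simp_all add: numeral_eq_Suc)
  have "\<sigma> p < \<sigma> (p + 1)" if u_ne: "u \<noteq> []"
  proof -
    obtain q where q: "length u = Suc q"
      using u_ne by (cases "length u") auto
    have "ad_pattern n \<sigma> ! q = last u"
      using u_ne unfolding w by (simp add: nth_append last_conv_nth q)
    then show ?thesis
      using left u_ne ad_pattern_nth_eq_A_iff[of q n \<sigma>] len q unfolding p_def by simp
  qed
  moreover have "\<sigma> (p + 4) < \<sigma> (p + 3)" if "v \<noteq> []"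
  proof -
    have "ad_pattern n \<sigma> ! (p + 2) = hd v"
      using that unfolding w p_def by (simp add: nth_append hd_conv_nth)
    then show ?thesis
      using right that ad_pattern_nth_eq_D_iff[OF perm, of "p + 2"] len
      by (simp add: numeral_eq_Suc)
  qed
  ultimately show ?thesis
    using not_symmetric_if_peak_at[OF perm _ up down] len left right
    unfolding p_def by fastforce
qed

theorem corollary4p6:
  fixes n :: nat and \<sigma> :: "nat \<Rightarrow> nat"
  assumes "labeled_path n \<sigma>"
    and "(\<exists>u v. ad_pattern n \<sigma> = u @ [A, A, D, D] @ v)
       \<or> (\<exists>v. ad_pattern n \<sigma> = [A, D, D] @ v)
       \<or> (\<exists>u. ad_pattern n \<sigma> = u @ [A, A, D])"
  shows "\<not> cqf_symmetric n \<sigma>"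
proof -
  have perm: "\<sigma> permutes {1..n}"
    using assms(1) unfolding labeled_path_def .
  from assms(2) obtain u v where "ad_pattern n \<sigma> = u @ [A, D] @ v"
    and "u = [] \<or> last u = A" and "v = [] \<or> hd v = D"
  proof (elim disjE exE)
    fix u v assume "ad_pattern n \<sigma> = u @ [A, A, D, D] @ v"
    then show thesis by (intro that[of "u @ [A]" "D # v"]) simp_all
  next
    fix v assume "ad_pattern n \<sigma> = [A, D, D] @ v"
    then show thesis by (intro that[of "[]" "D # v"]) simp_all
  next
    fix u assume "ad_pattern n \<sigma> = u @ [A, A, D]"
    then show thesis by (intro that[of "u @ [A]" "[]"]) simp_all
  qed
  then show ?thesis
    using not_symmetric_if_ad_factor[OF perm] by blast
qed

end
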